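(* Let $\lambda>0$ and let $\mu,m,g,\varkappa,\sigma_t$ be as described below. Then $$\lim_{t\to\infty}\sigma_t\,t\,g''(\lambda\sigma_t)=-\varkappa\lambda^{-2}\qquad\text{and}\qquad\lim_{t\to\infty}\sigma_t\,g'(\lambda\sigma_t)=0.$$
   Context: $\mu$ is a probability distribution on $(0,1)$, and $m(x)=-\log\mu((x,1))$ for $x\in[0,1)$ is twice differentiable on $[0,1)$ with $m'>0$ and $m''>0$ there, $\lim_{x\uparrow1}m''(x)/(m'(x))^2=0$, $\lim_{x\uparrow1}m''(x)m(x)x/(m'(x))^2=\varkappa$ for some $\varkappa>0$, and $\lim_{x\uparrow1}m(x)/m'(x)=0$. $g=m^{-1}:[0,\infty)\to[0,1)$. For all sufficiently large $t$, $\sigma_t$ denotes the unique solution $x\in[0,t)$ of $(\log g)'(\lambda x)=\frac1{\lambda(t-x)}$. *)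

theory Defs
  imports "HOL-Probability.Probability"
begin

end

theory Submission
  imports Defs
begin

(* Put x_t = g(lam sigma_t), so that m(x_t) = lam sigma_t. Since (log g)' = 1/(g * m' o g), the
   saddle point equation reads x_t m'(x_t) = lam (t - sigma_t). Hence lam t = x_t m'(x_t) + m(x_t)
   tends to infinity, which forces x_t -> 1 because m and m' are increasing. With g' = 1/(m' o g)
   and g'' = -(m'' o g)/(m' o g)^3 the two quantities become m/(lam m') and
   -lam^(-2) (m'' m x/m'^2) (1 + m/(x m')) evaluated at x_t, whose limits are the hypotheses. *)

locale increasing_convex_inverse =
  fixes m m' m'' g :: "real \<Rightarrow> real"
  assumes m_zero: "m 0 = 0"
    and m_has_derivative_within:
      "\<And>x. x \<in> {0..<1} \<Longrightarrow> (m has_real_derivative m' x) (at x within {0..<1})"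
    and m'_has_derivative_within:
      "\<And>x. x \<in> {0..<1} \<Longrightarrow> (m' has_real_derivative m'' x) (at x within {0..<1})"
    and m'_pos: "\<And>x. x \<in> {0..<1} \<Longrightarrow> m' x > 0"
    and m''_nonneg: "\<And>x. x \<in> {0..<1} \<Longrightarrow> m'' x \<ge> 0"
    and g_inverse: "\<And>y. y \<ge> 0 \<Longrightarrow> g y \<in> {0..<1} \<and> m (g y) = y"
begin

lemma m_has_derivative: "x \<in> {0<..<1} \<Longrightarrow> (m has_real_derivative m' x) (at x)"
  using m_has_derivative_within[of x] at_within_interior[of x "{0..<1}"] by auto

lemma m'_has_derivative: "x \<in> {0<..<1} \<Longrightarrow> (m' has_real_derivative m'' x) (at x)"
  using m'_has_derivative_within[of x] at_within_interior[of x "{0..<1}"] by auto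

lemma continuous_on_m: "continuous_on {0..<1} m"
  unfolding continuous_on_eq_continuous_within
  using m_has_derivative_within by (blast intro: DERIV_continuous)

lemma continuous_on_m': "continuous_on {0..<1} m'"
  unfolding continuous_on_eq_continuous_within
  using m'_has_derivative_within by (blast intro: DERIV_continuous)

lemma m_strict_mono: "strict_mono_on {0..<1} m"
proof (rule strict_mono_onI)
  fix x y :: real
  assume xy: "x \<in> {0..<1}" "y \<in> {0..<1}" "x < y"
  show "m x < m y"
  proof (rule DERIV_pos_imp_increasing_open[OF \<open>x < y\<close>])
    show "\<exists>d. (m has_real_derivative d) (at z) \<and> d > 0" if "x < z" "z < y" for z
      using that xy m_has_derivative[of z] m'_pos[of z] by auto
    show "continuous_on {x..y} m"
      by (rule continuous_on_subset[OF continuous_on_m]) (use xy in auto)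
  qed
qed

lemma m'_mono: "mono_on {0..<1} m'"
proof (rule mono_onI)
  fix x y :: real
  assume xy: "x \<in> {0..<1}" "y \<in> {0..<1}" "x \<le> y"
  show "m' x \<le> m' y"
  proof (rule DERIV_nonneg_imp_increasing_open[OF \<open>x \<le> y\<close>])
    show "\<exists>d. (m' has_real_derivative d) (at z) \<and> d \<ge> 0" if "x < z" "z < y" for z
      using that xy m'_has_derivative[of z] m''_nonneg[of z] by auto
    show "continuous_on {x..y} m'"
      by (rule continuous_on_subset[OF continuous_on_m']) (use xy in auto)
  qed
qed

lemma m_nonneg: "x \<in> {0..<1} \<Longrightarrow> m x \<ge> 0"
  using strict_mono_onD[OF m_strict_mono, of 0 x] m_zero by (cases "x = 0") auto

lemma g_m:
  assumes "x \<in> {0..<1}"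
  shows "g (m x) = x"
proof -
  have "g (m x) \<in> {0..<1}" "m (g (m x)) = m x"
    using g_inverse[OF m_nonneg[OF assms]] by auto
  then show ?thesis
    using inj_onD[OF strict_mono_on_imp_inj_on[OF m_strict_mono]] assms by blast
qed

lemma g_pos: "y > 0 \<Longrightarrow> g y \<in> {0<..<1}"
  using g_inverse[of y] m_zero by (cases "g y = 0") auto

lemma g_has_derivative:
  assumes "y > 0"
  shows "(g has_real_derivative 1 / m' (g y)) (at y)"
proof -
  have gy: "g y \<in> {0<..<1}"
    using g_pos[OF assms] .
  then obtain a b where ab: "0 < a" "a < g y" "g y < b" "b < 1"
    by (metis dense greaterThanLessThan_iff)
  have "isCont g (m (g y))"
  proof (rule isCont_inverse_function2[OF ab(2,3)])
    show "g (m z) = z" if "a \<le> z" "z \<le> b" for z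
      using g_m that ab by simp
    show "isCont m z" if "a \<le> z" "z \<le> b" for z
      using m_has_derivative[of z] that ab by (simp add: DERIV_isCont)
  qed
  have "(g has_real_derivative inverse (m' (g y))) (at y)"
  proof (rule DERIV_inverse_function[where a=0 and b="y + 1"])
    show "(m has_real_derivative m' (g y)) (at (g y))"
      using m_has_derivative gy .
    show "m' (g y) \<noteq> 0"
      using m'_pos[of "g y"] gy by simp
    show "m (g z) = z" if "0 < z" "z < y + 1" for z
      using g_inverse that by simp
    show "isCont g y"
      using \<open>isCont g (m (g y))\<close> g_inverse assms by simp
  qed (use assms in auto)
  then show ?thesis
    by (simp add: inverse_eq_divide)
qed

lemma deriv_g: "y > 0 \<Longrightarrow> deriv g y = 1 / m' (g y)"
  by (rule DERIV_imp_deriv[OF g_has_derivative])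

lemma deriv_deriv_g:
  assumes "y > 0"
  shows "deriv (deriv g) y = - m'' (g y) / m' (g y) ^ 3"
proof -
  have gy: "g y \<in> {0<..<1}"
    using g_pos[OF assms] .
  then have nz: "m' (g y) \<noteq> 0"
    using m'_pos[of "g y"] by simp
  have "((\<lambda>y. 1 / m' (g y)) has_real_derivative - m'' (g y) / m' (g y) ^ 3) (at y)"
    using DERIV_chain2[OF m'_has_derivative[OF gy] g_has_derivative[OF assms]] nz
    by (auto intro!: derivative_eq_intros simp: power2_eq_square power3_eq_cube)
  then have "(deriv g has_real_derivative - m'' (g y) / m' (g y) ^ 3) (at y)"
    by (rule has_field_derivative_transform_within_open[where S="{0<..}"])
      (use assms deriv_g in auto)
  then show ?thesis
    by (rule DERIV_imp_deriv)
qed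

lemma deriv_ln_g: "y > 0 \<Longrightarrow> deriv (\<lambda>y. ln (g y)) y = 1 / (g y * m' (g y))"
  using DERIV_chain2[OF DERIV_ln g_has_derivative, of y] g_pos[of y]
  by (intro DERIV_imp_deriv) (auto simp: field_simps)

lemma filterlim_at_left_one:
  fixes x :: "'a \<Rightarrow> real"
  assumes unbounded: "filterlim (\<lambda>t. x t * m' (x t) + m (x t)) at_top F"
    and range: "eventually (\<lambda>t. x t \<in> {0..<1}) F"
  shows "filterlim x (at_left 1) F"
  unfolding filterlim_at
proof (intro conjI order_tendstoI)
  show "eventually (\<lambda>t. x t \<in> {..<1} \<and> x t \<noteq> 1) F"
    using range by eventually_elim auto
  show "eventually (\<lambda>t. x t < a) F" if "a > 1" for a
    using range by eventually_elim (use that in auto)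
  show "eventually (\<lambda>t. a < x t) F" if "a < 1" for a
  proof -
    define b where "b = max a 0"
    have b: "b \<in> {0..<1}"
      using that by (auto simp: b_def)
    have "eventually (\<lambda>t. x t * m' (x t) + m (x t) > m' b + m b) F"
      using unbounded by (simp add: filterlim_at_top_dense)
    with range show ?thesis
    proof eventually_elim
      case (elim t)
      have "x t * m' (x t) + m (x t) \<le> m' b + m b" if "x t \<le> b"
      proof -
        have "x t * m' (x t) \<le> m' (x t)"
          using elim m'_pos[of "x t"] by (intro mult_left_le_one_le) auto
        also have "\<dots> \<le> m' b"
          using mono_onD[OF m'_mono] elim b that by blast
        finally show ?thesis
          using strict_mono_onD[OF m_strict_mono, of "x t" b] elim b that
          by (cases "x t = b") auto
      qed
      then show ?case
        using elim by (force simp: b_def)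
    qed
  qed
qed

lemma saddle_point_equation:
  assumes "lam > 0" "s > 0"
    and "deriv (\<lambda>y. ln (g y)) (lam * s) = 1 / (lam * (t - s))"
  shows "g (lam * s) * m' (g (lam * s)) = lam * (t - s)"
  using assms deriv_ln_g[of "lam * s"] by simp

lemma scaled_deriv_g:
  assumes "lam > 0" "s > 0"
  defines "x \<equiv> g (lam * s)"
  shows "s * deriv g (lam * s) = m x / m' x / lam"
  using assms g_inverse[of "lam * s"] deriv_g[of "lam * s"] by (simp add: field_simps)

lemma scaled_deriv_deriv_g:
  assumes lam: "lam > 0" and s: "s > 0"
    and saddle: "deriv (\<lambda>y. ln (g y)) (lam * s) = 1 / (lam * (t - s))"
  defines "x \<equiv> g (lam * s)"
  shows "s * t * deriv (deriv g) (lam * s)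
    = - (m'' x * m x * x / (m' x)\<^sup>2) * (1 + m x / m' x / x) / lam\<^sup>2"
proof -
  have x: "x \<in> {0<..<1}"
    using g_pos lam s by (simp add: x_def)
  have s_eq: "s = m x / lam"
    using g_inverse[of "lam * s"] lam s by (simp add: x_def)
  have t_eq: "t = (x * m' x + m x) / lam"
    using saddle_point_equation[OF lam s saddle] g_inverse[of "lam * s"] lam s
    by (simp add: x_def field_simps)
  have "m' x \<noteq> 0"
    using m'_pos[of x] x by simp
  have "s * t * deriv (deriv g) (lam * s) = s * t * (- m'' x / m' x ^ 3)"
    using deriv_deriv_g[of "lam * s"] lam s by (simp add: x_def)
  also have "\<dots> = m x / lam * ((x * m' x + m x) / lam) * (- m'' x / m' x ^ 3)"
    using s_eq t_eq by simp
  also have "\<dots> = - (m'' x * m x * x / (m' x)\<^sup>2) * (1 + m x / m' x / x) / lam\<^sup>2"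
    using \<open>m' x \<noteq> 0\<close> x lam by (simp add: field_simps power2_eq_square power3_eq_cube)
  finally show ?thesis .
qed

lemma saddle_point_tendsto_one:
  fixes \<sigma> :: "real \<Rightarrow> real"
  assumes lam: "lam > 0"
    and saddle: "eventually (\<lambda>t. \<sigma> t > 0
      \<and> deriv (\<lambda>y. ln (g y)) (lam * \<sigma> t) = 1 / (lam * (t - \<sigma> t))) at_top"
  shows "filterlim (\<lambda>t. g (lam * \<sigma> t)) (at_left 1) at_top"
proof (rule filterlim_at_left_one)
  have "eventually (\<lambda>t. lam * t = g (lam * \<sigma> t) * m' (g (lam * \<sigma> t)) + m (g (lam * \<sigma> t)))
      at_top"
    using saddle
  proof eventually_elim
    case (elim t)
    then show ?case
      using saddle_point_equation[OF lam, of "\<sigma> t" t] g_inverse[of "lam * \<sigma> t"] lam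
      by (simp add: algebra_simps)
  qed
  moreover have "filterlim (\<lambda>t. lam * t) at_top at_top"
    by (rule filterlim_tendsto_pos_mult_at_top[OF tendsto_const lam filterlim_ident])
  ultimately show "filterlim (\<lambda>t. g (lam * \<sigma> t) * m' (g (lam * \<sigma> t)) + m (g (lam * \<sigma> t)))
      at_top at_top"
    by (rule filterlim_cong[OF refl refl, THEN iffD1])
  show "eventually (\<lambda>t. g (lam * \<sigma> t) \<in> {0..<1}) at_top"
    using saddle by eventually_elim (use g_inverse lam in simp)
qed

lemma saddle_point_asymptotics:
  fixes \<sigma> :: "real \<Rightarrow> real"
  assumes lam: "lam > 0"
    and kappa: "((\<lambda>x. m'' x * m x * x / (m' x)\<^sup>2) \<longlongrightarrow> \<kappa>) (at_left 1)"
    and ratio: "((\<lambda>x. m x / m' x) \<longlongrightarrow> 0) (at_left 1)"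
    and saddle: "eventually (\<lambda>t. \<sigma> t > 0
      \<and> deriv (\<lambda>y. ln (g y)) (lam * \<sigma> t) = 1 / (lam * (t - \<sigma> t))) at_top"
  shows "((\<lambda>t. \<sigma> t * t * deriv (deriv g) (lam * \<sigma> t)) \<longlongrightarrow> - \<kappa> / lam\<^sup>2) at_top"
    and "((\<lambda>t. \<sigma> t * deriv g (lam * \<sigma> t)) \<longlongrightarrow> 0) at_top"
proof -
  define x where "x = (\<lambda>t. g (lam * \<sigma> t))"
  have x_lim: "filterlim x (at_left 1) at_top"
    unfolding x_def using lam saddle by (rule saddle_point_tendsto_one)
  have "((\<lambda>t. m'' (x t) * m (x t) * x t / (m' (x t))\<^sup>2) \<longlongrightarrow> \<kappa>) at_top"
    using filterlim_compose[OF kappa x_lim] by (simp add: o_def)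
  moreover have m_ratio: "((\<lambda>t. m (x t) / m' (x t)) \<longlongrightarrow> 0) at_top"
    using filterlim_compose[OF ratio x_lim] by (simp add: o_def)
  moreover have "(x \<longlongrightarrow> 1) at_top"
    using x_lim by (simp add: filterlim_at)
  ultimately have "((\<lambda>t. - (m'' (x t) * m (x t) * x t / (m' (x t))\<^sup>2)
      * (1 + m (x t) / m' (x t) / x t) / lam\<^sup>2) \<longlongrightarrow> - \<kappa> * (1 + 0 / 1) / lam\<^sup>2) at_top"
    by (intro tendsto_intros) (use lam in auto)
  moreover have "eventually (\<lambda>t. - (m'' (x t) * m (x t) * x t / (m' (x t))\<^sup>2)
      * (1 + m (x t) / m' (x t) / x t) / lam\<^sup>2 = \<sigma> t * t * deriv (deriv g) (lam * \<sigma> t)) at_top"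
    using saddle by eventually_elim (simp add: x_def scaled_deriv_deriv_g lam)
  ultimately show "((\<lambda>t. \<sigma> t * t * deriv (deriv g) (lam * \<sigma> t)) \<longlongrightarrow> - \<kappa> / lam\<^sup>2) at_top"
    by (simp add: Lim_transform_eventually)
  have "((\<lambda>t. m (x t) / m' (x t) / lam) \<longlongrightarrow> 0 / lam) at_top"
    by (intro tendsto_intros m_ratio) (use lam in simp)
  moreover have "eventually (\<lambda>t. m (x t) / m' (x t) / lam = \<sigma> t * deriv g (lam * \<sigma> t)) at_top"
    using saddle by eventually_elim (simp add: x_def scaled_deriv_g lam)
  ultimately show "((\<lambda>t. \<sigma> t * deriv g (lam * \<sigma> t)) \<longlongrightarrow> 0) at_top"
    by (simp add: Lim_transform_eventually)
qed

end

theorem lemma9: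
  fixes \<mu> :: "real measure"
    and m m' m'' g \<sigma> :: "real \<Rightarrow> real"
    and \<kappa> lam :: real
  assumes prob: "prob_space \<mu>"
    and sets_mu: "sets \<mu> = sets borel"
    and supp: "measure \<mu> {0<..<1} = 1"
    and m_def: "\<forall>x\<in>{0..<1}. m x = - ln (measure \<mu> {x<..<1})"
    and m_deriv: "\<forall>x\<in>{0..<1}. (m has_real_derivative m' x) (at x within {0..<1})"
    and m'_deriv: "\<forall>x\<in>{0..<1}. (m' has_real_derivative m'' x) (at x within {0..<1})"
    and m'_pos: "\<forall>x\<in>{0..<1}. m' x > 0"
    and m''_pos: "\<forall>x\<in>{0..<1}. m'' x > 0"
    and lim1: "((\<lambda>x. m'' x / (m' x)\<^sup>2) \<longlongrightarrow> 0) (at_left 1)"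
    and lim2: "((\<lambda>x. m'' x * m x * x / (m' x)\<^sup>2) \<longlongrightarrow> \<kappa>) (at_left 1)"
    and kappa_pos: "\<kappa> > 0"
    and lim3: "((\<lambda>x. m x / m' x) \<longlongrightarrow> 0) (at_left 1)"
    and g_inv: "\<forall>y\<ge>0. g y \<in> {0..<1} \<and> m (g y) = y"
    and lambda_pos: "lam > 0"
    and sigma: "eventually (\<lambda>t. \<sigma> t \<in> {0<..<t}
                 \<and> deriv (\<lambda>y. ln (g y)) (lam * \<sigma> t) = 1 / (lam * (t - \<sigma> t))
                 \<and> (\<forall>x\<in>{0<..<t}. deriv (\<lambda>y. ln (g y)) (lam * x) = 1 / (lam * (t - x))
                        \<longrightarrow> x = \<sigma> t)) at_top"
  shows "((\<lambda>t. \<sigma> t * t * deriv (deriv g) (lam * \<sigma> t)) \<longlongrightarrow> - \<kappa> / lam\<^sup>2) at_top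
         \<and> ((\<lambda>t. \<sigma> t * deriv g (lam * \<sigma> t)) \<longlongrightarrow> 0) at_top"
proof -
  \<comment> \<open>The measure enters only through m 0 = 0.\<close>
  have "m 0 = 0"
    using m_def supp by simp
  then interpret increasing_convex_inverse m m' m'' g
    using m_deriv m'_deriv m'_pos m''_pos g_inv by unfold_locales (auto simp: less_imp_le)
  have "eventually (\<lambda>t. \<sigma> t > 0
      \<and> deriv (\<lambda>y. ln (g y)) (lam * \<sigma> t) = 1 / (lam * (t - \<sigma> t))) at_top"
    using sigma by eventually_elim auto
  then show ?thesis
    using saddle_point_asymptotics[OF lambda_pos lim2 lim3] by blast
qed

end
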